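(* Let $G$ be a finite, simple, connected bipartite graph and let $I_G$ be its toric ideal over a field $K$. Then $\mathrm{Split}(I_G)=\mathrm{Split}_{\mathrm{rad}}(I_G)$.
   Context: Let $G$ have vertices $v_1,\ldots,v_n$ and edges $e_1,\ldots,e_m$. To an edge $e=\{v_i,v_j\}$ associate ${\bf a}_e\in\{0,1\}^n$ with entries $1$ in positions $i,j$ and $0$ elsewhere. $I_G\subset K[e_1,\ldots,e_m]$ is the toric ideal of $A_G=\{{\bf a}_e\mid e\in E(G)\}$, i.e. the kernel of $K[e_1,\ldots,e_m]\to K[t_1,\ldots,t_n]$, $e_i\mapsto{\bf t}^{{\bf a}_{e_i}}$. For a toric ideal $I_A$ (of a configuration $A$ of $N$ integer vectors with $\ker_{\mathbb{Z}}(A)\cap\mathbb{N}^N=\{{\bf 0}\}$) in $K[x_1,\ldots,x_N]$: $\mathrm{Split}(I_A)$ is the smallest integer $s$ such that there exist toric ideals $I_{A_1},\ldots,I_{A_s}$ in the same polynomial ring with $I_A=I_{A_1}+\cdots+I_{A_s}$ and $I_{A_i}\ne I_A$ for all $i$; $\mathrm{Split}_{\mathrm{rad}}(I_A)$ is the smallest integer $r$ such that there exist toric ideals $I_{A_1},\ldots,I_{A_r}$ with $I_A=\mathrm{rad}(I_{A_1}+\cdots+I_{A_r})$ and $I_{A_i}\ne I_A$ for all $i$. *)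

theory Defs
  imports Main "HOL-Library.Poly_Mapping"
begin

(* Polynomial ring K[x_e | e :: 'e] with finitely many variables indexed by the
  finite type 'e: monomials are exponent vectors 'e \<Rightarrow>\<^sub>0 nat, polynomials are finitely
  supported coefficient maps from monomials to K. *)
type_synonym ('e, 'k) mpoly = "('e \<Rightarrow>\<^sub>0 nat) \<Rightarrow>\<^sub>0 'k"

definition A_deg :: "('e::finite \<Rightarrow> 'd \<Rightarrow> int) \<Rightarrow> ('e \<Rightarrow>\<^sub>0 nat) \<Rightarrow> 'd \<Rightarrow> int" where
  "A_deg A u = (\<lambda>i. \<Sum>e\<in>UNIV. int (Poly_Mapping.lookup u e) * A e i)"

(* Toric ideal I_A: kernel of the K-algebra map x^u \<mapsto> t^(A u) into the Laurent
  polynomial ring. Since distinct Laurent monomials t^w are linearly independent,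
  f lies in the kernel iff for every w the coefficients of f on the fibre {u. A u = w}
  sum to zero. *)
definition toric_ideal :: "('e::finite \<Rightarrow> 'd \<Rightarrow> int) \<Rightarrow> ('e, 'k::field) mpoly set" where
  "toric_ideal A = {f. \<forall>w. (\<Sum>u\<in>{u \<in> Poly_Mapping.keys f. A_deg A u = w}. Poly_Mapping.lookup f u) = 0}"

(* Admissible configurations: finitely many integer vectors (one for each variable)
  in some Z^d, with ker_Z(A) \<inter> N^N = {0}. *)
definition configuration :: "('e::finite \<Rightarrow> nat \<Rightarrow> int) \<Rightarrow> bool" where
  "configuration A \<longleftrightarrow> (\<exists>d. \<forall>e i. d \<le> i \<longrightarrow> A e i = 0) \<and>
     (\<forall>u. A_deg A u = (\<lambda>_. 0) \<longrightarrow> u = 0)"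

definition ideal_gen :: "'a::comm_ring_1 set \<Rightarrow> 'a set" where
  "ideal_gen S = {f. \<exists>F r. finite F \<and> F \<subseteq> S \<and> f = (\<Sum>g\<in>F. r g * g)}"

definition rad :: "'a::comm_ring_1 set \<Rightarrow> 'a set" where
  "rad J = {f. \<exists>n. f ^ n \<in> J}"

definition toric_sum :: "nat \<Rightarrow> (nat \<Rightarrow> ('e::finite \<Rightarrow> nat \<Rightarrow> int)) \<Rightarrow> ('e, 'k::field) mpoly set" where
  "toric_sum s As = ideal_gen (\<Union>i<s. toric_ideal (As i))"

definition is_splitting :: "('e::finite, 'k::field) mpoly set \<Rightarrow> nat \<Rightarrow> bool" where
  "is_splitting I s \<longleftrightarrow> 1 \<le> s \<and> (\<exists>As. (\<forall>i<s. configuration (As i) \<and> toric_ideal (As i) \<noteq> I)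
       \<and> I = toric_sum s As)"

definition is_rad_splitting :: "('e::finite, 'k::field) mpoly set \<Rightarrow> nat \<Rightarrow> bool" where
  "is_rad_splitting I s \<longleftrightarrow> 1 \<le> s \<and> (\<exists>As. (\<forall>i<s. configuration (As i) \<and> toric_ideal (As i) \<noteq> I)
       \<and> I = rad (toric_sum s As))"

(* Split(I) and Split_rad(I): least sizes (only meaningful when some splitting exists). *)
definition Split :: "('e::finite, 'k::field) mpoly set \<Rightarrow> nat" where
  "Split I = (LEAST s. is_splitting I s)"

definition Split_rad :: "('e::finite, 'k::field) mpoly set \<Rightarrow> nat" where
  "Split_rad I = (LEAST s. is_rad_splitting I s)"

(* Finite simple graphs: vertex set = the finite type 'v, edge set = the finite type 'e,
  each edge e has endpoint set ends e of size 2, and distinct edges have distinct endpoints. *)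
definition simple_graph :: "('e::finite \<Rightarrow> 'v::finite set) \<Rightarrow> bool" where
  "simple_graph ends \<longleftrightarrow> (\<forall>e. card (ends e) = 2) \<and> inj ends"

definition graph_adj :: "('e \<Rightarrow> 'v set) \<Rightarrow> ('v \<times> 'v) set" where
  "graph_adj ends = {(x, y). \<exists>e. ends e = {x, y}}"

definition graph_connected :: "('e \<Rightarrow> 'v set) \<Rightarrow> bool" where
  "graph_connected ends \<longleftrightarrow> (\<forall>x y. (x, y) \<in> (graph_adj ends)\<^sup>*)"

definition graph_bipartite :: "('e \<Rightarrow> 'v set) \<Rightarrow> bool" where
  "graph_bipartite ends \<longleftrightarrow> (\<exists>X. \<forall>e. \<exists>x y. ends e = {x, y} \<and> x \<in> X \<and> y \<notin> X)"

definition graph_config :: "('e \<Rightarrow> 'v set) \<Rightarrow> 'e \<Rightarrow> 'v \<Rightarrow> int" where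
  "graph_config ends = (\<lambda>e v. if v \<in> ends e then 1 else 0)"

end

theory Submission
  imports Defs "HOL-Library.Countable" "HOL.Modules"
begin


(*
  Toric ideals are prime, hence radical, and for a bipartite graph G the toric ideal I_G is
  generated by the binomials x^a - x^b of the chordless even cycles of G, where a and b are the
  two perfect matchings of the cycle. Suppose I_G = rad (I_{A_1} + ... + I_{A_s}) with every
  I_{A_i} contained in I_G. A chordless cycle is rigid: if x^t - x^t' lies in I_G with t supported
  on a, then t and t' are multiples of a and b (after cancelling common variables). Hence, if
  x^a - x^b lay in no I_{A_i}, every monomial occurring in I_{A_i} would involve a variable outside
  the support of a; but some power (x^a - x^b)^n lies in the sum, and modulo the ideal of those
  variables it is congruent to the monomial x^(n a). So every generator of I_G lies in the sum,
  the sum equals I_G, and radical splittings of I_G are splittings.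
*)

abbreviation lookup :: "('a \<Rightarrow>\<^sub>0 'b::zero) \<Rightarrow> 'a \<Rightarrow> 'b" where "lookup \<equiv> Poly_Mapping.lookup"

abbreviation keys :: "('a \<Rightarrow>\<^sub>0 'b::zero) \<Rightarrow> 'a set" where "keys \<equiv> Poly_Mapping.keys"

abbreviation single :: "'a \<Rightarrow> 'b::zero \<Rightarrow> 'a \<Rightarrow>\<^sub>0 'b" where "single \<equiv> Poly_Mapping.single"

section \<open>Ideals and binomials\<close>

interpretation ideal: module "(*) :: 'a::comm_ring_1 \<Rightarrow> 'a \<Rightarrow> 'a"
  by standard (simp_all add: algebra_simps)

lemma ideal_gen_eq_span: "ideal_gen S = ideal.span S"
  unfolding ideal_gen_def ideal.span_explicit by blast

lemma subset_rad: "J \<subseteq> rad J"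
  unfolding rad_def by (auto intro: exI[of _ 1])

lemma pm_diff_add: "lookup b \<le> lookup a \<Longrightarrow> a - b + b = (a :: 'e \<Rightarrow>\<^sub>0 nat)"
  by (rule poly_mapping_eqI) (simp add: lookup_add lookup_minus le_fun_def)

lemma lookup_single_le: "e \<in> keys a \<Longrightarrow> lookup (single e 1) \<le> lookup (a :: 'e \<Rightarrow>\<^sub>0 nat)"
  by (auto simp: le_fun_def lookup_single when_def in_keys_iff)

lemma keys_mono: "lookup p \<le> lookup a \<Longrightarrow> keys p \<subseteq> keys (a :: 'e \<Rightarrow>\<^sub>0 nat)"
  by (metis in_keys_iff le_0_eq le_funD subsetI)

lemma monom_common_part:
  fixes t t' :: "'e \<Rightarrow>\<^sub>0 nat"
  obtains m where "t = m + (t - t')" "t' = m + (t' - t)"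
proof
  show "t = (t - (t - t')) + (t - t')" "t' = (t - (t - t')) + (t' - t)"
    by (rule poly_mapping_eqI; simp add: lookup_add lookup_minus)+
qed

definition binom :: "('e \<Rightarrow>\<^sub>0 nat) \<Rightarrow> ('e \<Rightarrow>\<^sub>0 nat) \<Rightarrow> ('e, 'k::field) mpoly" where
  "binom a b = single a 1 - single b 1"

lemma binom_self [simp]: "binom a a = 0"
  by (simp add: binom_def)

lemma binom_trans: "binom a b + binom b c = binom a c"
  by (simp add: binom_def)

lemma monom_mult_binom: "single c 1 * binom a b = binom (c + a) (c + b)"
  by (simp add: binom_def right_diff_distrib mult_single)

lemma lookup_binom: "lookup (binom a b) u = (if u = a then 1 else 0) - (if u = b then 1 else 0)"
  by (simp add: binom_def lookup_minus lookup_single)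

lemma keys_binom: "keys (binom a b) \<subseteq> {a, b}"
  by (auto simp: in_keys_iff lookup_binom split: if_splits)

lemma binom_in_ideal_trans:
  "ideal.subspace J \<Longrightarrow> binom a b \<in> J \<Longrightarrow> binom b c \<in> J \<Longrightarrow> binom a c \<in> J"
  by (metis binom_trans ideal.subspace_add)

lemma binom_in_ideal_shift:
  "ideal.subspace J \<Longrightarrow> binom a b \<in> J \<Longrightarrow> binom (c + a) (c + b) \<in> J"
  by (metis monom_mult_binom ideal.subspace_scale)

lemma binom_in_ideal_cancel:
  assumes J: "ideal.subspace J" and "lookup c \<le> lookup a" "lookup c \<le> lookup b"
    and "binom (a - c) (b - c) \<in> J"
  shows "binom a b \<in> J"
  using binom_in_ideal_shift[OF J assms(4), of c] pm_diff_add[OF assms(2)] pm_diff_add[OF assms(3)]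
  by (simp add: add.commute)

lemma binom_in_ideal_replace:
  assumes J: "ideal.subspace J" and "lookup p \<le> lookup a" and "binom p q \<in> J"
  shows "binom a (a - p + q) \<in> J"
  using binom_in_ideal_shift[OF J assms(3), of "a - p"] pm_diff_add[OF assms(2)] by simp

section \<open>Toric ideals\<close>

lemma A_deg_add: "A_deg A (u + v) i = A_deg A u i + A_deg A v i"
  unfolding A_deg_def by (simp add: lookup_add algebra_simps sum.distrib)

lemma A_deg_cancel: "A_deg A (m + u) = A_deg A (m + v) \<longleftrightarrow> A_deg A u = A_deg A v"
  by (simp add: A_deg_add fun_eq_iff)

lemma A_deg_scale:
  assumes "\<And>e. lookup t e = k * lookup a e"
  shows "A_deg A t i = int k * A_deg A a i"
proof -
  have "A_deg A t i = (\<Sum>e\<in>UNIV. int k * (int (lookup a e) * A e i))"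
    unfolding A_deg_def by (intro sum.cong refl) (simp only: assms of_nat_mult mult.assoc)
  also have "\<dots> = int k * A_deg A a i"
    unfolding A_deg_def by (simp add: sum_distrib_left)
  finally show ?thesis .
qed

lemma in_toric_ideal_iff:
  assumes "finite S" "keys f \<subseteq> S"
  shows "f \<in> toric_ideal A \<longleftrightarrow> (\<forall>w. (\<Sum>u\<in>{u \<in> S. A_deg A u = w}. lookup f u) = 0)"
proof -
  have "(\<Sum>u\<in>{u \<in> keys f. A_deg A u = w}. lookup f u) = (\<Sum>u\<in>{u \<in> S. A_deg A u = w}. lookup f u)" for w
    using assms by (intro sum.mono_neutral_left) (auto simp: in_keys_iff)
  then show ?thesis by (simp add: toric_ideal_def)
qed

lemma binom_in_toric_ideal_iff:
  "(binom a b :: ('e::finite, 'k::field) mpoly) \<in> toric_ideal A \<longleftrightarrow> A_deg A a = A_deg A b"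
proof (cases "a = b")
  case False
  have "{u \<in> {a, b}. A_deg A u = w} =
      (if A_deg A a = w then {a} else {}) \<union> (if A_deg A b = w then {b} else {})" for w
    by auto
  then have "(\<Sum>u\<in>{u \<in> {a, b}. A_deg A u = w}. lookup (binom a b :: ('e, 'k) mpoly) u)
      = (if A_deg A a = w then 1 else 0) - (if A_deg A b = w then 1 else 0)" for w
    using False by (simp add: lookup_binom)
  moreover have "(binom a b :: ('e, 'k) mpoly) \<in> toric_ideal A \<longleftrightarrow>
      (\<forall>w. (\<Sum>u\<in>{u \<in> {a, b}. A_deg A u = w}. lookup (binom a b :: ('e, 'k) mpoly) u) = 0)"
    by (rule in_toric_ideal_iff) (simp_all add: keys_binom)
  moreover have "(\<forall>w. (if A_deg A a = w then 1 else 0) - (if A_deg A b = w then 1 else (0::'k)) = 0)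
      \<longleftrightarrow> A_deg A a = A_deg A b"
    by (auto dest: spec[of _ "A_deg A a"] split: if_splits)
  ultimately show ?thesis
    by presburger
qed (simp add: toric_ideal_def)

lemma toric_ideal_fibre_partner:
  assumes "h \<in> toric_ideal A" "t \<in> keys h"
  shows "\<exists>t'\<in>keys h. A_deg A t' = A_deg A t \<and> t' \<noteq> t"
proof (rule ccontr)
  assume "\<not> ?thesis"
  then have "{u \<in> keys h. A_deg A u = A_deg A t} = {t}" using assms(2) by auto
  moreover have "(\<Sum>u\<in>{u \<in> keys h. A_deg A u = A_deg A t}. lookup h u) = 0"
    using assms(1) unfolding toric_ideal_def by blast
  ultimately show False
    using assms(2) unfolding in_keys_iff by simp
qed

definition toric_exp :: "('e::finite \<Rightarrow> 'd::finite \<Rightarrow> int) \<Rightarrow> ('e \<Rightarrow>\<^sub>0 nat) \<Rightarrow> nat \<Rightarrow>\<^sub>0 int" where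
  "toric_exp A u = (\<Sum>d\<in>UNIV. single (to_nat d) (A_deg A u d))"

lemma lookup_toric_exp:
  fixes A :: "'e::finite \<Rightarrow> 'd::finite \<Rightarrow> int"
  shows "lookup (toric_exp A u) i = (if i \<in> range (to_nat :: 'd \<Rightarrow> nat) then A_deg A u (from_nat i) else 0)"
proof -
  have "lookup (toric_exp A u) i = (\<Sum>d\<in>UNIV. if d \<in> {d. to_nat d = i} then A_deg A u d else 0)"
    by (simp add: toric_exp_def lookup_sum lookup_single when_def eq_commute)
  also have "\<dots> = (\<Sum>d\<in>{d. to_nat d = i}. A_deg A u d)"
    by (simp add: sum.If_cases)
  also have "{d :: 'd. to_nat d = i} = (if i \<in> range (to_nat :: 'd \<Rightarrow> nat) then {from_nat i} else {})"
    by (auto simp: inj_eq[OF inj_to_nat] from_nat_to_nat)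
  finally show ?thesis
    by simp
qed

lemma toric_exp_eq_iff: "toric_exp A u = toric_exp A v \<longleftrightarrow> A_deg A u = A_deg A v"
  by (metis (no_types, lifting) ext poly_mapping_eqI from_nat_to_nat lookup_toric_exp rangeI)

lemma toric_exp_add: "toric_exp A (u + v) = toric_exp A u + toric_exp A v"
  by (simp add: toric_exp_def A_deg_add single_add sum.distrib)

lemma toric_exp_0: "toric_exp A 0 = 0"
  by (simp add: toric_exp_def A_deg_def)

definition toric_hom :: "('e::finite \<Rightarrow> 'd::finite \<Rightarrow> int) \<Rightarrow> ('e, 'k::field) mpoly \<Rightarrow> (nat \<Rightarrow>\<^sub>0 int) \<Rightarrow>\<^sub>0 'k" where
  "toric_hom A f = (\<Sum>u\<in>keys f. single (toric_exp A u) (lookup f u))"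

lemma toric_hom_eq_sum:
  "finite S \<Longrightarrow> keys f \<subseteq> S \<Longrightarrow> toric_hom A f = (\<Sum>u\<in>S. single (toric_exp A u) (lookup f u))"
  unfolding toric_hom_def by (rule sum.mono_neutral_left) (auto simp: in_keys_iff)

lemma toric_hom_0 [simp]: "toric_hom A 0 = 0"
  by (simp add: toric_hom_def)

lemma toric_hom_single: "toric_hom A (single u c) = single (toric_exp A u) c"
  by (cases "c = 0") (simp_all add: toric_hom_def)

lemma toric_hom_add: "toric_hom A (f + g) = toric_hom A f + toric_hom A g"
proof -
  have "toric_hom A (f + g) = (\<Sum>u\<in>keys f \<union> keys g. single (toric_exp A u) (lookup (f + g) u))"
    by (rule toric_hom_eq_sum) (auto simp: keys_add)
  also have "\<dots> = toric_hom A f + toric_hom A g"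
    by (simp add: lookup_add single_add sum.distrib toric_hom_eq_sum[of "keys f \<union> keys g"])
  finally show ?thesis .
qed

lemma toric_hom_sum: "finite F \<Longrightarrow> toric_hom A (\<Sum>x\<in>F. h x) = (\<Sum>x\<in>F. toric_hom A (h x))"
  by (induction F rule: finite_induct) (simp_all add: toric_hom_add)

lemma sum_single_lookup: "(\<Sum>u\<in>keys f. single u (lookup f u)) = f"
  by (rule poly_mapping_eqI) (simp add: lookup_sum lookup_single when_def in_keys_iff)

lemma toric_hom_mult: "toric_hom A (f * g) = toric_hom A f * toric_hom A g"
proof -
  have "f * g = (\<Sum>u\<in>keys f. \<Sum>v\<in>keys g. single (u + v) (lookup f u * lookup g v))"
    by (subst (1 2) sum_single_lookup[symmetric]) (simp add: sum_product mult_single)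
  then have "toric_hom A (f * g) =
      (\<Sum>u\<in>keys f. \<Sum>v\<in>keys g. single (toric_exp A u + toric_exp A v) (lookup f u * lookup g v))"
    by (simp add: toric_hom_sum toric_hom_single toric_exp_add)
  then show ?thesis
    by (simp add: toric_hom_def sum_product mult_single)
qed

lemma toric_hom_power: "toric_hom A (f ^ n) = toric_hom A f ^ n"
  by (induction n) (simp_all add: toric_hom_mult toric_hom_single toric_exp_0 flip: single_one)

lemma lookup_toric_hom: "lookup (toric_hom A f) W = (\<Sum>u\<in>{u \<in> keys f. toric_exp A u = W}. lookup f u)"
  by (simp add: toric_hom_def lookup_sum lookup_single when_def sum.inter_filter eq_commute)

lemma fibre_sums_zero_cong:
  assumes "\<And>u v. g u = g v \<longleftrightarrow> h u = h v"
  shows "(\<forall>w. (\<Sum>u\<in>{u \<in> K. g u = w}. c u) = 0) \<longleftrightarrow> (\<forall>w. (\<Sum>u\<in>{u \<in> K. h u = w}. c u) = 0)"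
proof -
  have *: "\<forall>w. (\<Sum>u\<in>{u \<in> K. h u = w}. c u) = 0"
    if "\<forall>w. (\<Sum>u\<in>{u \<in> K. g u = w}. c u) = 0" "\<And>u v. g u = g v \<longleftrightarrow> h u = h v" for g h
  proof
    fix w
    show "(\<Sum>u\<in>{u \<in> K. h u = w}. c u) = 0"
    proof (cases "\<exists>u0\<in>K. h u0 = w")
      case True
      then obtain u0 where "u0 \<in> K" "h u0 = w" by blast
      then have "{u \<in> K. h u = w} = {u \<in> K. g u = g u0}" using that(2) by auto
      then show ?thesis using that(1) by simp
    next
      case False
      then have "{u \<in> K. h u = w} = {}" by auto
      then show ?thesis by (simp only: sum.empty)
    qed
  qed
  show ?thesis using *[of g h] *[of h g] assms by blast
qed

lemma toric_ideal_eq_kernel: "f \<in> toric_ideal A \<longleftrightarrow> toric_hom A f = 0"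
proof -
  have "f \<in> toric_ideal A \<longleftrightarrow> (\<forall>W. (\<Sum>u\<in>{u \<in> keys f. toric_exp A u = W}. lookup f u) = 0)"
    unfolding toric_ideal_def mem_Collect_eq by (intro fibre_sums_zero_cong) (simp add: toric_exp_eq_iff)
  then show ?thesis
    by (simp add: poly_mapping_eq_iff fun_eq_iff lookup_toric_hom)
qed

lemma ideal_toric_ideal: "ideal.subspace (toric_ideal (A :: 'e::finite \<Rightarrow> 'd::finite \<Rightarrow> int) :: ('e, 'k::field) mpoly set)"
  by (rule ideal.subspaceI) (simp_all add: toric_ideal_eq_kernel toric_hom_add toric_hom_mult)

lemma rad_toric_ideal:
  "rad (toric_ideal (A :: 'e::finite \<Rightarrow> 'd::finite \<Rightarrow> int)) = (toric_ideal A :: ('e, 'k::field) mpoly set)"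
proof
  show "rad (toric_ideal A) \<subseteq> toric_ideal A"
    by (auto simp: rad_def toric_ideal_eq_kernel toric_hom_power)
qed (rule subset_rad)

lemma toric_ideal_subset_if_binoms:
  fixes A :: "'e::finite \<Rightarrow> 'd::finite \<Rightarrow> int" and J :: "('e, 'k::field) mpoly set"
  assumes J: "ideal.subspace J"
    and binoms: "\<And>a b. A_deg A a = A_deg A b \<Longrightarrow> binom a b \<in> J"
  shows "toric_ideal A \<subseteq> J"
proof
  fix f :: "('e, 'k) mpoly"
  assume "f \<in> toric_ideal A"
  then show "f \<in> J"
  proof (induction "card (keys f)" arbitrary: f rule: less_induct)
    case less
    show ?case
    proof (cases "f = 0")
      case True
      then show ?thesis using J ideal.subspace_0 by blast
    next
      case False
      then obtain u where u: "u \<in> keys f" by fastforce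
      then obtain u' where u': "u' \<in> keys f" "A_deg A u' = A_deg A u" "u' \<noteq> u"
        using toric_ideal_fibre_partner[OF less.prems] by blast
      define g where "g = f - single 0 (lookup f u) * binom u u'"
      have "single 0 (lookup f u) * binom u u' = single u (lookup f u) - single u' (lookup f u)"
        by (simp add: binom_def right_diff_distrib mult_single)
      then have "keys g \<subseteq> keys f - {u}"
        using u' by (auto simp: g_def in_keys_iff lookup_minus lookup_single when_def split: if_splits)
      then have "keys g \<subset> keys f"
        using u by blast
      moreover have "binom u u' \<in> toric_ideal A"
        using u' by (simp add: binom_in_toric_ideal_iff)
      then have "g \<in> toric_ideal A"
        unfolding g_def using less.prems ideal_toric_ideal by (metis ideal.subspace_diff ideal.subspace_scale)
      ultimately have "g \<in> J"
        using less.hyps by (simp add: psubset_card_mono)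
      moreover have "single 0 (lookup f u) * binom u u' \<in> J"
        using binoms u'(2) J ideal.subspace_scale by metis
      ultimately show ?thesis
        using J ideal.subspace_add unfolding g_def by fastforce
    qed
  qed
qed

lemma ideal_toric_sum: "ideal.subspace (toric_sum s As)"
  by (simp add: toric_sum_def ideal_gen_eq_span ideal.subspace_span)

lemma toric_ideal_subset_toric_sum: "i < s \<Longrightarrow> toric_ideal (As i) \<subseteq> toric_sum s As"
  unfolding toric_sum_def ideal_gen_eq_span by (intro subset_trans[OF _ ideal.span_superset]) blast

section \<open>Binomials in a radical of a sum of toric ideals\<close>

definition var_ideal :: "'e set \<Rightarrow> ('e, 'k::field) mpoly set" where
  "var_ideal V = {h. \<forall>t\<in>keys h. keys t \<inter> V \<noteq> {}}"

lemma ideal_var_ideal: "ideal.subspace (var_ideal V :: ('e, 'k::field) mpoly set)"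
proof (rule ideal.subspaceI)
  fix f g :: "('e, 'k) mpoly"
  assume "f \<in> var_ideal V" "g \<in> var_ideal V"
  then show "f + g \<in> var_ideal V"
    using keys_add[of f g] by (auto simp: var_ideal_def)
next
  fix r f :: "('e, 'k) mpoly"
  assume f: "f \<in> var_ideal V"
  show "r * f \<in> var_ideal V"
  proof (unfold var_ideal_def, intro CollectI ballI)
    fix t assume "t \<in> keys (r * f)"
    then obtain x y where "t = x + y" "y \<in> keys f"
      using keys_mult[of r f] by blast
    moreover from \<open>t = x + y\<close> have "keys y \<subseteq> keys t"
      by (auto simp: in_keys_iff lookup_add)
    ultimately show "keys t \<inter> V \<noteq> {}"
      using f by (auto simp: var_ideal_def)
  qed
qed (simp add: var_ideal_def)

lemma binom_power_mod_var_ideal: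
  assumes "keys a \<inter> V = {}" "keys b \<inter> V \<noteq> {}"
  shows "\<exists>m. keys m \<inter> V = {} \<and> binom a b ^ n - single m 1 \<in> (var_ideal V :: ('e, 'k::field) mpoly set)"
proof (induction n)
  case 0
  show ?case by (intro exI[of _ 0]) (simp add: var_ideal_def)
next
  case (Suc n)
  then obtain m where m: "keys m \<inter> V = {}" "binom a b ^ n - single m 1 \<in> (var_ideal V :: ('e, 'k) mpoly set)"
    by blast
  have "(single (b + m) 1 :: ('e, 'k) mpoly) \<in> var_ideal V"
    using assms(2) by (auto simp: var_ideal_def in_keys_iff lookup_add)
  then have "binom a b * (binom a b ^ n - single m 1) - single (b + m) 1 \<in> (var_ideal V :: ('e, 'k) mpoly set)"
    using m(2) ideal_var_ideal by (metis ideal.subspace_diff ideal.subspace_scale)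
  moreover have "binom a b * (binom a b ^ n - single m 1) - single (b + m) 1
      = binom a b ^ Suc n - (single (a + m) 1 :: ('e, 'k) mpoly)"
    by (simp add: binom_def algebra_simps mult_single)
  moreover have "keys (a + m) \<inter> V = {}"
    using keys_add[of a m] assms(1) m(1) by blast
  ultimately show ?case by metis
qed

lemma binom_power_notin_var_ideal:
  assumes "keys a \<inter> V = {}" "keys b \<inter> V \<noteq> {}"
  shows "binom a b ^ n \<notin> (var_ideal V :: ('e, 'k::field) mpoly set)"
proof
  assume "binom a b ^ n \<in> (var_ideal V :: ('e, 'k) mpoly set)"
  moreover obtain m where "keys m \<inter> V = {}" "binom a b ^ n - single m 1 \<in> (var_ideal V :: ('e, 'k) mpoly set)"
    using binom_power_mod_var_ideal[OF assms] by blast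
  ultimately have "binom a b ^ n - (binom a b ^ n - single m 1) \<in> (var_ideal V :: ('e, 'k) mpoly set)"
    using ideal_var_ideal ideal.subspace_diff by blast
  with \<open>keys m \<inter> V = {}\<close> show False
    by (simp add: var_ideal_def)
qed

lemma toric_ideal_subset_var_ideal:
  fixes A :: "'e::finite \<Rightarrow> 'd \<Rightarrow> int" and B :: "'e \<Rightarrow> 'd' \<Rightarrow> int"
  assumes sub: "toric_ideal A \<subseteq> (toric_ideal B :: ('e, 'k::field) mpoly set)"
    and no_pair: "\<And>t t'. keys t \<subseteq> U \<Longrightarrow> keys t \<inter> keys t' = {} \<Longrightarrow> t \<noteq> t' \<Longrightarrow>
      A_deg B t = A_deg B t' \<Longrightarrow> A_deg A t = A_deg A t' \<Longrightarrow> False"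
  shows "toric_ideal A \<subseteq> (var_ideal (- U) :: ('e, 'k) mpoly set)"
proof
  fix h :: "('e, 'k) mpoly"
  assume h: "h \<in> toric_ideal A"
  show "h \<in> var_ideal (- U)"
  proof (unfold var_ideal_def, intro CollectI ballI notI)
    fix t assume t: "t \<in> keys h" and "keys t \<inter> - U = {}"
    then have tU: "keys t \<subseteq> U" by blast
    obtain t' where t': "t' \<in> keys h" "A_deg A t' = A_deg A t" "t' \<noteq> t"
      using toric_ideal_fibre_partner[OF h t] by blast
    then have "(binom t t' :: ('e, 'k) mpoly) \<in> toric_ideal A"
      by (simp add: binom_in_toric_ideal_iff)
    then have B: "A_deg B t = A_deg B t'"
      using sub binom_in_toric_ideal_iff by blast
    obtain m where m: "t = m + (t - t')" "t' = m + (t' - t)"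
      by (rule monom_common_part)
    have "keys (t - t') \<subseteq> U"
      using tU by (auto simp: in_keys_iff lookup_minus)
    moreover have "keys (t - t') \<inter> keys (t' - t) = {}"
      by (auto simp: in_keys_iff lookup_minus)
    moreover have "t - t' \<noteq> t' - t"
      using m t'(3) \<open>keys (t - t') \<inter> keys (t' - t) = {}\<close> by (metis inf.idem keys_eq_empty)
    moreover have "A_deg B (t - t') = A_deg B (t' - t)"
      using B m by (metis A_deg_cancel)
    moreover have "A_deg A (t - t') = A_deg A (t' - t)"
      using t'(2) m by (metis A_deg_cancel)
    ultimately show False
      by (rule no_pair)
  qed
qed

lemma binom_in_toric_summand_if_rigid:
  fixes B :: "'e::finite \<Rightarrow> 'd \<Rightarrow> int" and As :: "nat \<Rightarrow> 'e \<Rightarrow> nat \<Rightarrow> int"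
  assumes summands: "\<And>i. i < s \<Longrightarrow> toric_ideal (As i) \<subseteq> (toric_ideal B :: ('e, 'k::field) mpoly set)"
    and rad: "(binom a b :: ('e, 'k) mpoly) \<in> rad (toric_sum s As)"
    and b: "\<not> keys b \<subseteq> keys a"
    and rigid: "\<And>i t t'. i < s \<Longrightarrow> keys t \<subseteq> keys a \<Longrightarrow> keys t \<inter> keys t' = {} \<Longrightarrow> t \<noteq> t' \<Longrightarrow>
      A_deg B t = A_deg B t' \<Longrightarrow> A_deg (As i) t = A_deg (As i) t' \<Longrightarrow> A_deg (As i) a = A_deg (As i) b"
  shows "\<exists>i<s. (binom a b :: ('e, 'k) mpoly) \<in> toric_ideal (As i)"
proof (rule ccontr)
  assume "\<not> ?thesis"
  then have "toric_ideal (As i) \<subseteq> (var_ideal (- keys a) :: ('e, 'k) mpoly set)" if "i < s" for i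
    using that summands rigid
    by (intro toric_ideal_subset_var_ideal[where B = B]) (auto simp: binom_in_toric_ideal_iff)
  then have "toric_sum s As \<subseteq> (var_ideal (- keys a) :: ('e, 'k) mpoly set)"
    unfolding toric_sum_def ideal_gen_eq_span by (intro ideal.span_minimal ideal_var_ideal) blast
  moreover obtain n where "(binom a b :: ('e, 'k) mpoly) ^ n \<in> toric_sum s As"
    using rad unfolding rad_def by blast
  ultimately show False
    using binom_power_notin_var_ideal[of a "- keys a" b n] b by blast
qed

section \<open>Edge monomials and vertex degrees\<close>

definition vdeg :: "('e::finite \<Rightarrow> 'v set) \<Rightarrow> ('e \<Rightarrow>\<^sub>0 nat) \<Rightarrow> 'v \<Rightarrow> nat" where
  "vdeg ends a v = (\<Sum>e\<in>UNIV. if v \<in> ends e then lookup a e else 0)"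

definition total_deg :: "('e::finite \<Rightarrow>\<^sub>0 nat) \<Rightarrow> nat" where
  "total_deg a = (\<Sum>e\<in>UNIV. lookup a e)"

definition edge_monom :: "'e set \<Rightarrow> 'e \<Rightarrow>\<^sub>0 nat" where
  "edge_monom P = (\<Sum>e\<in>P. single e 1)"

lemma A_deg_graph_config: "A_deg (graph_config ends) u = (\<lambda>v. int (vdeg ends u v))"
  unfolding A_deg_def vdeg_def graph_config_def
  by (rule ext) (simp add: if_distrib of_nat_sum cong: if_cong)

lemma A_deg_graph_config_eq_iff:
  "A_deg (graph_config ends) a = A_deg (graph_config ends) b \<longleftrightarrow> vdeg ends a = vdeg ends b"
  by (auto simp: A_deg_graph_config fun_eq_iff)

lemma lookup_edge_monom: "finite P \<Longrightarrow> lookup (edge_monom P) e = (if e \<in> P then 1 else 0)"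
  by (simp add: edge_monom_def lookup_sum lookup_single when_def)

lemma keys_edge_monom: "finite P \<Longrightarrow> keys (edge_monom P) = P"
  by (auto simp: in_keys_iff lookup_edge_monom split: if_splits)

lemma edge_monom_le: "P \<subseteq> keys a \<Longrightarrow> lookup (edge_monom P) \<le> lookup (a :: 'e::finite \<Rightarrow>\<^sub>0 nat)"
  by (auto simp: le_fun_def lookup_edge_monom in_keys_iff Suc_le_eq)

lemma edge_monom_insert: "finite P \<Longrightarrow> e \<notin> P \<Longrightarrow> edge_monom (insert e P) = single e 1 + edge_monom P"
  by (simp add: edge_monom_def)

lemma vdeg_add: "vdeg ends (a + b) v = vdeg ends a v + vdeg ends b v"
  unfolding vdeg_def sum.distrib[symmetric] by (intro sum.cong) (auto simp: lookup_add)

lemma vdeg_zero [simp]: "vdeg ends 0 v = 0"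
  by (simp add: vdeg_def)

lemma vdeg_single: "vdeg ends (single e n) v = (if v \<in> ends e then n else 0)"
proof -
  have "vdeg ends (single e n) v = (\<Sum>x\<in>UNIV. if x = e then (if v \<in> ends e then n else 0) else 0)"
    unfolding vdeg_def by (intro sum.cong) (auto simp: lookup_single when_def)
  then show ?thesis
    by simp
qed

lemma lookup_le_vdeg: "v \<in> ends e \<Longrightarrow> lookup a e \<le> vdeg ends a v"
  unfolding vdeg_def
  using member_le_sum[of e UNIV "\<lambda>e. if v \<in> ends e then lookup a e else 0"] by simp

lemma vdeg_ne_0_if_in_keys: "e \<in> keys a \<Longrightarrow> v \<in> ends e \<Longrightarrow> vdeg ends a v \<noteq> 0"
  using lookup_le_vdeg[of v ends e a] by (auto simp: in_keys_iff)

lemma vdeg_mono: "lookup p \<le> lookup a \<Longrightarrow> vdeg ends p v \<le> vdeg ends a v"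
  unfolding vdeg_def le_fun_def by (intro sum_mono) auto

lemma vdeg_diff: "lookup b \<le> lookup a \<Longrightarrow> vdeg ends (a - b) v = vdeg ends a v - vdeg ends b v"
  using vdeg_add[of ends "a - b" b v] pm_diff_add[of b a] by simp

lemma vdeg_eq_0_iff: "vdeg ends a v = 0 \<longleftrightarrow> (\<forall>e\<in>keys a. v \<notin> ends e)"
  by (auto simp: vdeg_def in_keys_iff)

lemma vdeg_edge_monom: "vdeg ends (edge_monom P) v = card {e \<in> P. v \<in> ends e}"
proof -
  have "vdeg ends (edge_monom P) v = (\<Sum>e\<in>UNIV. if e \<in> {e \<in> P. v \<in> ends e} then 1 else 0)"
    unfolding vdeg_def by (intro sum.cong) (auto simp: lookup_edge_monom)
  then show ?thesis
    by (simp add: sum.If_cases)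
qed

lemma vdeg_edge_monom_keys:
  assumes "\<forall>v. vdeg ends a v \<le> 1" "keys t \<subseteq> keys a"
  shows "vdeg ends (edge_monom (keys t)) v = (if vdeg ends t v = 0 then 0 else 1)"
proof -
  have "vdeg ends (edge_monom (keys t)) v \<le> 1"
    using vdeg_mono[OF edge_monom_le[OF assms(2)], of ends v] assms(1) by (meson order_trans)
  moreover have "vdeg ends (edge_monom (keys t)) v = 0 \<longleftrightarrow> vdeg ends t v = 0"
    by (simp add: vdeg_eq_0_iff keys_edge_monom)
  ultimately show ?thesis
    by auto
qed

lemma total_deg_add: "total_deg (a + b) = total_deg a + total_deg b"
  by (simp add: total_deg_def lookup_add sum.distrib)

lemma total_deg_single: "total_deg (single e n) = n"
  by (simp add: total_deg_def lookup_single when_def)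

lemma total_deg_edge_monom: "total_deg (edge_monom P) = card P"
  by (simp add: total_deg_def lookup_edge_monom sum.If_cases)

lemma total_deg_diff: "lookup b \<le> lookup a \<Longrightarrow> total_deg (a - b) = total_deg a - total_deg b"
  using total_deg_add[of "a - b" b] pm_diff_add[of b a] by simp

lemma total_deg_less: "lookup p \<le> lookup a \<Longrightarrow> p \<noteq> a \<Longrightarrow> total_deg p < total_deg a"
  unfolding total_deg_def
  by (metis le_fun_def nless_le poly_mapping_eqI sum_strict_mono_ex1 finite_UNIV UNIV_I)

definition primitive_binomial :: "('e::finite \<Rightarrow> 'v set) \<Rightarrow> ('e \<Rightarrow>\<^sub>0 nat) \<Rightarrow> ('e \<Rightarrow>\<^sub>0 nat) \<Rightarrow> bool" where
  "primitive_binomial ends a b \<longleftrightarrow> a \<noteq> 0 \<and> vdeg ends a = vdeg ends b \<and> keys a \<inter> keys b = {} \<and>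
     (\<forall>p q. lookup p \<le> lookup a \<longrightarrow> lookup q \<le> lookup b \<longrightarrow> vdeg ends p = vdeg ends q \<longrightarrow> p \<noteq> 0 \<longrightarrow> p = a)"

definition chordless :: "('e::finite \<Rightarrow> 'v set) \<Rightarrow> ('e \<Rightarrow>\<^sub>0 nat) \<Rightarrow> ('e \<Rightarrow>\<^sub>0 nat) \<Rightarrow> bool" where
  "chordless ends a b \<longleftrightarrow> (\<forall>e. (\<forall>v\<in>ends e. vdeg ends a v \<noteq> 0) \<longrightarrow> e \<in> keys a \<or> e \<in> keys b)"

lemma finite_invariant_subset:
  assumes "finite Z0" "Z0 \<noteq> {}" "h ` Z0 \<subseteq> Z0"
  shows "\<exists>Z\<subseteq>Z0. Z \<noteq> {} \<and> h ` Z = Z"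
  using assms
proof (induction "card Z0" arbitrary: Z0 rule: less_induct)
  case less
  show ?case
  proof (cases "h ` Z0 = Z0")
    case True
    then show ?thesis
      using less.prems(2) by (intro exI[of _ Z0]) simp
  next
    case False
    with less.prems have "card (h ` Z0) < card Z0"
      by (simp add: psubset_card_mono psubset_eq)
    moreover have "h ` h ` Z0 \<subseteq> h ` Z0" "h ` Z0 \<noteq> {}"
      using less.prems(2,3) by auto
    ultimately obtain Z where "Z \<subseteq> h ` Z0" "Z \<noteq> {}" "h ` Z = Z"
      using less.hyps less.prems(1) by (meson finite_imageI)
    then show ?thesis
      using less.prems(3) by (intro exI[of _ Z]) auto
  qed
qed

lemma card_eq_or_image_eq:
  assumes "finite Z" "inj_on k Z" "\<And>x. x \<in> Z \<Longrightarrow> k x \<noteq> x"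
  shows "card {x \<in> Z. v = x \<or> v = k x} = (if v \<in> Z then 1 else 0) + (if v \<in> k ` Z then 1 else 0)"
proof -
  have "{x \<in> Z. v = x \<or> v = k x} = {x \<in> Z. x = v} \<union> {x \<in> Z. k x = v}"
    by auto
  moreover have "{x \<in> Z. x = v} \<inter> {x \<in> Z. k x = v} = {}"
    using assms(3) by auto
  moreover have "{x \<in> Z. x = v} = (if v \<in> Z then {v} else {})"
    by auto
  then have "card {x \<in> Z. x = v} = (if v \<in> Z then 1 else 0)"
    by simp
  moreover have "card {x \<in> Z. k x = v} = (if v \<in> k ` Z then 1 else 0)"
  proof (cases "v \<in> k ` Z")
    case True
    then obtain x0 where "x0 \<in> Z" "v = k x0" by blast
    then have "{x \<in> Z. k x = v} = {x0}"
      using assms(2) by (auto dest: inj_onD)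
    then show ?thesis using True by simp
  next
    case False
    then have "{x \<in> Z. k x = v} = {}" by auto
    then show ?thesis using False by (simp only: card.empty) simp
  qed
  ultimately show ?thesis
    using assms(1) by (simp add: card_Un_disjoint)
qed

lemma inj_on_crossing_edges:
  assumes "\<And>x. x \<in> Z \<Longrightarrow> ends (h x) = {x, k x} \<and> x \<in> Y \<and> k x \<notin> Y"
  shows "inj_on h Z"
proof (rule inj_onI)
  fix x y assume xy: "x \<in> Z" "y \<in> Z" "h x = h y"
  have "ends (h x) = {x, k x}" "ends (h y) = {y, k y}" "k x \<notin> Y" "y \<in> Y"
    using assms[OF xy(1)] assms[OF xy(2)] by simp_all
  then have "x = y \<or> k x = y"
    using xy(3) by (auto simp: doubleton_eq_iff)
  then show "x = y"
    using \<open>k x \<notin> Y\<close> \<open>y \<in> Y\<close> by auto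
qed

lemma vdeg_edge_monom_image:
  assumes "finite Z" "inj_on h Z" "inj_on k Z" "\<And>x. x \<in> Z \<Longrightarrow> ends (h x) = {x, k x} \<and> k x \<noteq> x"
  shows "vdeg ends (edge_monom (h ` Z)) v = (if v \<in> Z then 1 else 0) + (if v \<in> k ` Z then 1 else 0)"
proof -
  have "{e \<in> h ` Z. v \<in> ends e} = h ` {x \<in> Z. v = x \<or> v = k x}"
    using assms(4) by auto
  then have "card {e \<in> h ` Z. v \<in> ends e} = card {x \<in> Z. v = x \<or> v = k x}"
    using assms(2) by (simp add: card_image inj_on_subset)
  also have "\<dots> = (if v \<in> Z then 1 else 0) + (if v \<in> k ` Z then 1 else 0)"
    using assms(4) by (intro card_eq_or_image_eq[OF assms(1,3)]) auto
  finally show ?thesis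
    by (simp add: vdeg_edge_monom)
qed

lemma partner_edges_exist:
  assumes "\<And>e. \<exists>x y. ends e = {x, y} \<and> x \<in> Y \<and> y \<notin> Y"
  shows "\<exists>ea f. \<forall>x\<in>Y. vdeg ends a x \<noteq> 0 \<longrightarrow> ea x \<in> keys a \<and> f x \<notin> Y \<and> ends (ea x) = {x, f x}"
proof -
  have "\<exists>p. vdeg ends a x \<noteq> 0 \<longrightarrow> fst p \<in> keys a \<and> snd p \<notin> Y \<and> ends (fst p) = {x, snd p}"
    if "x \<in> Y" for x
  proof (cases "vdeg ends a x = 0")
    case False
    then obtain e where "e \<in> keys a" "x \<in> ends e"
      by (auto simp: vdeg_eq_0_iff)
    moreover obtain x' y where "ends e = {x', y}" "x' \<in> Y" "y \<notin> Y"
      using assms[of e] by blast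
    moreover have "x' = x"
      using that \<open>x \<in> ends e\<close> calculation(3-5) by (metis empty_iff insert_iff)
    ultimately show ?thesis
      by (intro exI[of _ "(e, y)"]) auto
  qed simp
  then have "\<forall>x\<in>Y. \<exists>p. vdeg ends a x \<noteq> 0 \<longrightarrow> fst p \<in> keys a \<and> snd p \<notin> Y \<and> ends (fst p) = {x, snd p}"
    by blast
  from bchoice[OF this] obtain F where "\<forall>x\<in>Y. vdeg ends a x \<noteq> 0 \<longrightarrow>
      fst (F x) \<in> keys a \<and> snd (F x) \<notin> Y \<and> ends (fst (F x)) = {x, snd (F x)}"
    by blast
  then show ?thesis
    by (intro exI[of _ "fst \<circ> F"] exI[of _ "snd \<circ> F"]) simp
qed

section \<open>Bipartite graphs\<close>

locale bipartite_graph =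
  fixes ends :: "'e::finite \<Rightarrow> 'v::finite set" and X :: "'v set"
  assumes simple: "simple_graph ends"
    and bipartition: "\<And>e. \<exists>x y. ends e = {x, y} \<and> x \<in> X \<and> y \<notin> X"
begin

lemma card_ends: "card (ends e) = 2"
  using simple by (simp add: simple_graph_def)

lemma ends_nonempty: "\<exists>v. v \<in> ends e"
  using bipartition[of e] by auto

lemma zero_if_vdeg_zero: "(\<And>v. vdeg ends a v = 0) \<Longrightarrow> a = 0"
  by (metis ends_nonempty keys_eq_empty vdeg_eq_0_iff ex_in_conv)

lemma vdeg_eq_imp_zero_iff: "vdeg ends a = vdeg ends b \<Longrightarrow> a = 0 \<longleftrightarrow> b = 0"
  by (metis vdeg_zero zero_if_vdeg_zero)

lemma sum_vdeg: "(\<Sum>v\<in>UNIV. vdeg ends a v) = 2 * total_deg a"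
proof -
  have "(\<Sum>v\<in>UNIV. vdeg ends a v) = (\<Sum>e\<in>UNIV. \<Sum>v\<in>UNIV. if v \<in> ends e then lookup a e else 0)"
    unfolding vdeg_def by (rule sum.swap)
  also have "\<dots> = (\<Sum>e\<in>UNIV. 2 * lookup a e)"
    by (simp add: sum.If_cases card_ends)
  finally show ?thesis
    by (simp add: total_deg_def sum_distrib_left)
qed

lemma total_deg_eq_if_vdeg_eq: "vdeg ends a = vdeg ends b \<Longrightarrow> total_deg a = total_deg b"
  using sum_vdeg[of a] sum_vdeg[of b] by simp

lemma eq_if_le_vdeg_eq: "lookup q \<le> lookup b \<Longrightarrow> vdeg ends q = vdeg ends b \<Longrightarrow> q = b"
  by (metis pm_diff_add add_0 vdeg_diff diff_self_eq_0 zero_if_vdeg_zero)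

lemma lookup_add_le_vdeg:
  "e \<noteq> e' \<Longrightarrow> v \<in> ends e \<Longrightarrow> v \<in> ends e' \<Longrightarrow> lookup a e + lookup a e' \<le> vdeg ends a v"
proof -
  assume "e \<noteq> e'" "v \<in> ends e" "v \<in> ends e'"
  then have "lookup a e + lookup a e' = (\<Sum>x\<in>{e, e'}. if v \<in> ends x then lookup a x else 0)"
    by simp
  also have "\<dots> \<le> vdeg ends a v"
    unfolding vdeg_def by (intro sum_mono2) auto
  finally show ?thesis .
qed

lemma eq_single_if_vdeg_eq: "vdeg ends c = vdeg ends (single e 1) \<Longrightarrow> c = single e 1"
proof -
  assume c: "vdeg ends c = vdeg ends (single e 1)"
  have "e' = e" if "e' \<in> keys c" for e'
  proof -
    have "v \<in> ends e" if "v \<in> ends e'" for v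
      using lookup_le_vdeg[of v ends e' c] that \<open>e' \<in> keys c\<close> c
      by (auto simp: vdeg_single fun_eq_iff in_keys_iff split: if_splits)
    then have "ends e' = ends e"
      using card_ends[of e] card_ends[of e'] by (metis card_subset_eq finite subsetI)
    then show "e' = e"
      using simple by (auto simp: simple_graph_def dest: injD)
  qed
  then have "vdeg ends c v = lookup c e" if "v \<in> ends e" for v
    unfolding vdeg_def using that by (subst sum.remove[of _ e]) (auto simp: in_keys_iff intro!: sum.neutral)
  then have "lookup c e = 1"
    using c ends_nonempty[of e] by (auto simp: fun_eq_iff vdeg_single)
  with \<open>\<And>e'. e' \<in> keys c \<Longrightarrow> e' = e\<close> show "c = single e 1"
    by (intro poly_mapping_eqI) (auto simp: lookup_single when_def in_keys_iff)
qed

lemma alternating_edges_exist: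
  assumes ab: "vdeg ends a = vdeg ends b"
  obtains ea f eb g where
    "\<And>x. x \<in> X \<Longrightarrow> vdeg ends a x \<noteq> 0 \<Longrightarrow>
      ea x \<in> keys a \<and> f x \<notin> X \<and> ends (ea x) = {x, f x} \<and> vdeg ends b (f x) \<noteq> 0"
    "\<And>y. y \<notin> X \<Longrightarrow> vdeg ends b y \<noteq> 0 \<Longrightarrow>
      eb y \<in> keys b \<and> g y \<in> X \<and> ends (eb y) = {y, g y} \<and> vdeg ends a (g y) \<noteq> 0"
proof -
  have "\<exists>ea f. \<forall>x\<in>X. vdeg ends a x \<noteq> 0 \<longrightarrow> ea x \<in> keys a \<and> f x \<notin> X \<and> ends (ea x) = {x, f x}"
    by (rule partner_edges_exist[OF bipartition])
  then obtain ea f where A: "\<forall>x\<in>X. vdeg ends a x \<noteq> 0 \<longrightarrow> ea x \<in> keys a \<and> f x \<notin> X \<and> ends (ea x) = {x, f x}"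
    by blast
  have "\<exists>x y. ends e = {x, y} \<and> x \<in> - X \<and> y \<notin> - X" for e
  proof -
    obtain x y where "ends e = {x, y}" "x \<in> X" "y \<notin> X"
      using bipartition[of e] by blast
    then show ?thesis
      by (intro exI[of _ y] exI[of _ x]) (simp add: insert_commute)
  qed
  then have "\<exists>eb g. \<forall>y\<in>-X. vdeg ends b y \<noteq> 0 \<longrightarrow> eb y \<in> keys b \<and> g y \<notin> - X \<and> ends (eb y) = {y, g y}"
    by (rule partner_edges_exist)
  then obtain eb g where B: "\<forall>y\<in>-X. vdeg ends b y \<noteq> 0 \<longrightarrow> eb y \<in> keys b \<and> g y \<notin> - X \<and> ends (eb y) = {y, g y}"
    by blast
  show ?thesis
  proof (rule that)
    show "ea x \<in> keys a \<and> f x \<notin> X \<and> ends (ea x) = {x, f x} \<and> vdeg ends b (f x) \<noteq> 0"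
      if "x \<in> X" "vdeg ends a x \<noteq> 0" for x
      using A that vdeg_ne_0_if_in_keys[of "ea x" a "f x" ends] ab by auto
    show "eb y \<in> keys b \<and> g y \<in> X \<and> ends (eb y) = {y, g y} \<and> vdeg ends a (g y) \<noteq> 0"
      if "y \<notin> X" "vdeg ends b y \<noteq> 0" for y
      using B that vdeg_ne_0_if_in_keys[of "eb y" b "g y" ends] ab by auto
  qed
qed

lemma alternating_cycle:
  assumes Z0: "Z0 \<noteq> {}" "Z0 \<subseteq> X"
    and f: "\<And>x. x \<in> Z0 \<Longrightarrow> f x \<notin> X \<and> ends (ea x) = {x, f x}"
    and g: "\<And>x. x \<in> Z0 \<Longrightarrow> g (f x) \<in> Z0 \<and> ends (eb (f x)) = {f x, g (f x)}"
  obtains Z where "Z \<noteq> {}" "Z \<subseteq> Z0" "(g \<circ> f) ` Z = Z" "inj_on ea Z" "inj_on f Z"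
    "vdeg ends (edge_monom (ea ` Z)) = vdeg ends (edge_monom (eb ` f ` Z))"
    "\<forall>v. vdeg ends (edge_monom (ea ` Z)) v \<le> 1"
proof -
  have fX: "f x \<notin> X" and ea: "ends (ea x) = {x, f x}"
    and gZ0: "g (f x) \<in> Z0" and eb: "ends (eb (f x)) = {f x, g (f x)}" if "x \<in> Z0" for x
    using f[OF that] g[OF that] by blast+
  have "(g \<circ> f) ` Z0 \<subseteq> Z0"
    using gZ0 by (simp add: image_subset_iff)
  then have "\<exists>Z\<subseteq>Z0. Z \<noteq> {} \<and> (g \<circ> f) ` Z = Z"
    by (rule finite_invariant_subset[OF finite Z0(1)])
  then obtain Z where Z: "Z \<subseteq> Z0" "Z \<noteq> {}" "(g \<circ> f) ` Z = Z"
    by meson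
  have ZX: "x \<in> X" if "x \<in> Z" for x
    using Z(1) Z0(2) that by blast
  have "inj_on (g \<circ> f) Z"
    using Z(3) by (intro eq_card_imp_inj_on[OF finite]) simp
  then have inj_f: "inj_on f Z" and inj_g: "inj_on g (f ` Z)"
    by (rule inj_on_imageI2, rule inj_on_imageI)
  have a_edges: "ends (ea x) = {x, f x} \<and> x \<in> X \<and> f x \<notin> X" if "x \<in> Z" for x
    using that Z(1) ZX fX ea by auto
  have b_edges: "ends (eb y) = {y, g y} \<and> y \<in> - X \<and> g y \<notin> - X" if "y \<in> f ` Z" for y
    using that Z(1) Z0(2) fX gZ0 eb by auto
  have inj_ea: "inj_on ea Z" and inj_eb: "inj_on eb (f ` Z)"
    using inj_on_crossing_edges[where ends = ends, OF a_edges] inj_on_crossing_edges[where ends = ends, OF b_edges]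
    by simp_all
  have vdeg_P: "vdeg ends (edge_monom (ea ` Z)) v = (if v \<in> Z then 1 else 0) + (if v \<in> f ` Z then 1 else 0)" for v
    by (intro vdeg_edge_monom_image[OF finite inj_ea inj_f]) (metis a_edges)
  have "vdeg ends (edge_monom (eb ` f ` Z)) v = (if v \<in> f ` Z then 1 else 0) + (if v \<in> g ` f ` Z then 1 else 0)" for v
    using b_edges by (intro vdeg_edge_monom_image[OF finite inj_eb inj_g]) auto
  moreover have "g ` f ` Z = Z"
    using Z(3) by (simp add: image_comp)
  ultimately have vdeg_Q: "vdeg ends (edge_monom (eb ` f ` Z)) v = (if v \<in> f ` Z then 1 else 0) + (if v \<in> Z then 1 else 0)" for v
    by simp
  have "vdeg ends (edge_monom (ea ` Z)) v \<le> 1" for v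
    unfolding vdeg_P using fX Z(1) ZX by auto
  moreover have "vdeg ends (edge_monom (ea ` Z)) = vdeg ends (edge_monom (eb ` f ` Z))"
    using vdeg_P vdeg_Q by (simp add: fun_eq_iff)
  ultimately show ?thesis
    using that Z inj_ea inj_f by metis
qed

lemma exists_cycle_below:
  assumes ab: "vdeg ends a = vdeg ends b" and "a \<noteq> 0"
  shows "\<exists>p q. lookup p \<le> lookup a \<and> lookup q \<le> lookup b \<and> vdeg ends p = vdeg ends q \<and> p \<noteq> 0
    \<and> (\<forall>v. vdeg ends p v \<le> 1)"
proof -
  obtain ea f eb g where
    A: "\<And>x. x \<in> X \<Longrightarrow> vdeg ends a x \<noteq> 0 \<Longrightarrow>
      ea x \<in> keys a \<and> f x \<notin> X \<and> ends (ea x) = {x, f x} \<and> vdeg ends b (f x) \<noteq> 0" and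
    B: "\<And>y. y \<notin> X \<Longrightarrow> vdeg ends b y \<noteq> 0 \<Longrightarrow>
      eb y \<in> keys b \<and> g y \<in> X \<and> ends (eb y) = {y, g y} \<and> vdeg ends a (g y) \<noteq> 0"
    using alternating_edges_exist[OF ab] by metis
  define Z0 where "Z0 = {x \<in> X. vdeg ends a x \<noteq> 0}"
  obtain e where "e \<in> keys a"
    using \<open>a \<noteq> 0\<close> by fastforce
  moreover obtain x y where "ends e = {x, y}" "x \<in> X"
    using bipartition[of e] by blast
  ultimately have "x \<in> Z0"
    using vdeg_ne_0_if_in_keys[of e a x] by (simp add: Z0_def)
  then have ne: "Z0 \<noteq> {}"
    by blast
  have sub: "Z0 \<subseteq> X" and f_ea: "\<And>x. x \<in> Z0 \<Longrightarrow> f x \<notin> X \<and> ends (ea x) = {x, f x}"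
    and g_eb: "\<And>x. x \<in> Z0 \<Longrightarrow> g (f x) \<in> Z0 \<and> ends (eb (f x)) = {f x, g (f x)}"
    using A B by (auto simp: Z0_def)
  obtain Z where Z: "Z \<noteq> {}" "Z \<subseteq> Z0" "(g \<circ> f) ` Z = Z" "inj_on ea Z" "inj_on f Z"
    "vdeg ends (edge_monom (ea ` Z)) = vdeg ends (edge_monom (eb ` f ` Z))"
    "\<forall>v. vdeg ends (edge_monom (ea ` Z)) v \<le> 1"
    by (rule alternating_cycle[OF ne sub f_ea g_eb])
  have "ea ` Z \<subseteq> keys a" "eb ` f ` Z \<subseteq> keys b"
    using Z(2) A B by (auto simp: Z0_def)
  moreover have "edge_monom (ea ` Z) \<noteq> 0"
    using Z(1) by (metis keys_edge_monom finite keys_zero image_is_empty)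
  ultimately show ?thesis
    using Z(6,7) by (intro exI[of _ "edge_monom (ea ` Z)"] exI[of _ "edge_monom (eb ` f ` Z)"])
      (simp add: edge_monom_le)
qed

lemma primitive_vdeg_le_1:
  assumes "primitive_binomial ends a b"
  shows "vdeg ends a v \<le> 1"
proof -
  have ab: "vdeg ends a = vdeg ends b" "a \<noteq> 0"
    and minimal: "\<And>p q. lookup p \<le> lookup a \<Longrightarrow> lookup q \<le> lookup b \<Longrightarrow> vdeg ends p = vdeg ends q \<Longrightarrow> p \<noteq> 0 \<Longrightarrow> p = a"
    using assms by (auto simp: primitive_binomial_def)
  obtain p q where "lookup p \<le> lookup a" "lookup q \<le> lookup b" "vdeg ends p = vdeg ends q" "p \<noteq> 0"
    "\<forall>v. vdeg ends p v \<le> 1"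
    using exists_cycle_below[OF ab] by blast
  then show ?thesis
    using minimal by metis
qed

lemma exists_primitive_below:
  assumes "vdeg ends a = vdeg ends b" "a \<noteq> 0" "keys a \<inter> keys b = {}"
  shows "\<exists>p q. lookup p \<le> lookup a \<and> lookup q \<le> lookup b \<and> primitive_binomial ends p q"
proof -
  define C where "C p \<longleftrightarrow> (\<exists>q. lookup p \<le> lookup a \<and> lookup q \<le> lookup b \<and> vdeg ends p = vdeg ends q \<and> p \<noteq> 0)"
    for p
  have "C a"
    using assms(1,2) by (auto simp: C_def)
  then obtain p where "C p" and least: "\<And>p'. C p' \<Longrightarrow> total_deg p \<le> total_deg p'"
    using ex_has_least_nat[of C a total_deg] by blast
  then obtain q where pq: "lookup p \<le> lookup a" "lookup q \<le> lookup b" "vdeg ends p = vdeg ends q" "p \<noteq> 0"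
    by (auto simp: C_def)
  have "p' = p" if "lookup p' \<le> lookup p" "lookup q' \<le> lookup q" "vdeg ends p' = vdeg ends q'" "p' \<noteq> 0"
    for p' q'
  proof -
    have "C p'"
      unfolding C_def using that pq order_trans by blast
    then show "p' = p"
      using least total_deg_less[OF that(1)] by fastforce
  qed
  moreover have "keys p \<inter> keys q = {}"
    using keys_mono[OF pq(1)] keys_mono[OF pq(2)] assms(3) by blast
  ultimately have "primitive_binomial ends p q"
    using pq(3,4) by (simp add: primitive_binomial_def)
  then show ?thesis
    using pq(1,2) by blast
qed

lemma primitive_chord_split:
  assumes prim: "primitive_binomial ends a b"
    and chord: "\<forall>v\<in>ends e. vdeg ends a v \<noteq> 0" and e: "e \<notin> keys a" "e \<notin> keys b"
  shows "\<exists>p q. lookup p \<le> lookup a \<and> lookup q \<le> lookup b \<and> p \<noteq> a \<and> 2 \<le> total_deg p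
    \<and> vdeg ends p = vdeg ends (q + single e 1)"
proof -
  have ab: "vdeg ends a = vdeg ends b"
    and minimal: "\<And>p q. lookup p \<le> lookup a \<Longrightarrow> lookup q \<le> lookup b \<Longrightarrow> vdeg ends p = vdeg ends q \<Longrightarrow> p \<noteq> 0 \<Longrightarrow> p = a"
    using prim by (auto simp: primitive_binomial_def)
  obtain w1 w2 where w: "ends e = {w1, w2}" "w1 \<in> X" "w2 \<notin> X"
    using bipartition[of e] by blast
  have a_w1: "vdeg ends a w1 \<noteq> 0" and a_w2: "vdeg ends a w2 \<noteq> 0"
    using chord w(1) by auto
  obtain ea f eb g where
    A: "\<And>x. x \<in> X \<Longrightarrow> vdeg ends a x \<noteq> 0 \<Longrightarrow>
      ea x \<in> keys a \<and> f x \<notin> X \<and> ends (ea x) = {x, f x} \<and> vdeg ends b (f x) \<noteq> 0" and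
    B: "\<And>y. y \<notin> X \<Longrightarrow> vdeg ends b y \<noteq> 0 \<Longrightarrow>
      eb y \<in> keys b \<and> g y \<in> X \<and> ends (eb y) = {y, g y} \<and> vdeg ends a (g y) \<noteq> 0"
    using alternating_edges_exist[OF ab] by metis
  define Z0 where "Z0 = {x \<in> X. vdeg ends a x \<noteq> 0}"
  define eb' where "eb' y = (if y = w2 then e else eb y)" for y
  define g' where "g' y = (if y = w2 then w1 else g y)" for y
  have f_ea: "f x \<notin> X \<and> ends (ea x) = {x, f x}" and ea_a: "ea x \<in> keys a" and f_b: "vdeg ends b (f x) \<noteq> 0"
    if "x \<in> Z0" for x
    using A that by (auto simp: Z0_def)
  have g'_Z0: "g' (f x) \<in> Z0 \<and> ends (eb' (f x)) = {f x, g' (f x)}" if "x \<in> Z0" for x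
    using w a_w1 B f_ea[OF that] f_b[OF that] by (auto simp: g'_def eb'_def Z0_def insert_commute)
  have "w1 \<in> Z0" "Z0 \<subseteq> X"
    using w(2) a_w1 by (auto simp: Z0_def)
  then obtain Z where Z: "Z \<noteq> {}" "Z \<subseteq> Z0" "(g' \<circ> f) ` Z = Z" "inj_on ea Z" "inj_on f Z"
    "vdeg ends (edge_monom (ea ` Z)) = vdeg ends (edge_monom (eb' ` f ` Z))"
    "\<forall>v. vdeg ends (edge_monom (ea ` Z)) v \<le> 1"
    using alternating_cycle[OF _ _ f_ea g'_Z0] by (metis empty_iff)
  have Pa: "ea ` Z \<subseteq> keys a"
    using Z(2) ea_a by blast
  have eb_b: "eb' y \<in> keys b" if y: "y \<in> f ` Z" "y \<noteq> w2" for y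
  proof -
    obtain x where "x \<in> Z0" "y = f x"
      using y(1) Z(2) by blast
    then show ?thesis
      using B f_ea f_b y(2) by (auto simp: eb'_def)
  qed
  have p0: "edge_monom (ea ` Z) \<noteq> 0"
    using Z(1) by (metis keys_edge_monom finite keys_zero image_is_empty)
  have w2: "w2 \<in> f ` Z"
  proof (rule ccontr)
    assume w2: "w2 \<notin> f ` Z"
    then have "eb' ` f ` Z \<subseteq> keys b"
      using eb_b by auto
    then have "edge_monom (ea ` Z) = a"
      using minimal[OF edge_monom_le[OF Pa] edge_monom_le Z(6) p0] by blast
    then have ka: "keys a = ea ` Z"
      by (metis keys_edge_monom finite)
    obtain e' where "e' \<in> keys a" "w2 \<in> ends e'"
      using a_w2 by (auto simp: vdeg_eq_0_iff)
    then obtain z where "z \<in> Z" "w2 \<in> ends (ea z)"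
      using ka by auto
    then have "w2 \<in> {z, f z}" "z \<in> X"
      using f_ea Z(2) \<open>Z0 \<subseteq> X\<close> by auto
    then have "w2 = f z"
      using w(3) by auto
    then show False
      using w2 \<open>z \<in> Z\<close> by blast
  qed
  define Y where "Y = f ` Z - {w2}"
  have Yb: "eb ` Y \<subseteq> keys b"
    using eb_b by (auto simp: Y_def eb'_def)
  have "eb' ` f ` Z = insert e (eb ` Y)"
  proof -
    have "f ` Z = insert w2 Y" "eb' ` Y = eb ` Y" "eb' w2 = e"
      using w2 by (auto simp: Y_def eb'_def)
    then show ?thesis
      by (metis image_insert)
  qed
  moreover have "e \<notin> eb ` Y"
    using Yb e(2) by blast
  ultimately have Q: "edge_monom (eb' ` f ` Z) = edge_monom (eb ` Y) + single e 1"
    by (simp add: edge_monom_insert add.commute)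
  define p where "p = edge_monom (ea ` Z)"
  define q where "q = edge_monom (eb ` Y)"
  have pq: "vdeg ends p = vdeg ends (q + single e 1)"
    using Z(6) Q by (simp add: p_def q_def)
  have "2 \<le> card Z"
  proof (rule ccontr)
    assume "\<not> 2 \<le> card Z"
    moreover have "card Z \<noteq> 0"
      using Z(1) by simp
    ultimately have "card Z = 1"
      by linarith
    then obtain z where Zz: "Z = {z}"
      by (rule card_1_singletonE)
    then have "z \<in> Z0" "f z = w2" "g' (f z) = z"
      using w2 Z(2,3) by auto
    then have "ends (ea z) = ends e"
      using f_ea w(1) by (simp add: g'_def)
    then have "ea z = e"
      using simple by (simp add: simple_graph_def inj_eq)
    then show False
      using ea_a[OF \<open>z \<in> Z0\<close>] e(1) by simp
  qed
  then have "2 \<le> total_deg p"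
    by (simp add: p_def total_deg_edge_monom card_image Z(4))
  moreover have "p \<noteq> a"
  proof
    assume "p = a"
    have "vdeg ends (b - q) = vdeg ends (single e 1)"
      using pq edge_monom_le[OF Yb] \<open>p = a\<close> ab
      by (auto simp: fun_eq_iff vdeg_diff vdeg_add q_def)
    then have "b - q = single e 1"
      by (rule eq_single_if_vdeg_eq)
    then have "e \<in> keys b"
      by (metis in_keys_iff lookup_minus lookup_single_eq zero_diff one_neq_zero)
    with e(2) show False ..
  qed
  ultimately show ?thesis
    using pq edge_monom_le[OF Pa] edge_monom_le[OF Yb] by (auto simp: p_def q_def)
qed

lemma binom_in_ideal_if_common_edge:
  fixes J :: "('e, 'k::field) mpoly set"
  assumes J: "ideal.subspace J"
    and smaller: "\<And>a' b'. total_deg a' < n \<Longrightarrow> vdeg ends a' = vdeg ends b' \<Longrightarrow> binom a' b' \<in> J"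
    and "total_deg a \<le> n" "vdeg ends a = vdeg ends b" "e \<in> keys a" "e \<in> keys b"
  shows "binom a b \<in> J"
proof (rule binom_in_ideal_cancel[OF J lookup_single_le[OF assms(5)] lookup_single_le[OF assms(6)]])
  have "a - single e 1 \<noteq> a"
  proof
    assume "a - single e 1 = a"
    then have "lookup (a - single e 1) e = lookup a e"
      by simp
    then show False
      using assms(5) by (simp add: lookup_minus in_keys_iff)
  qed
  then have "total_deg (a - single e 1) < total_deg a"
    by (intro total_deg_less) (simp add: le_fun_def lookup_minus)
  moreover have "vdeg ends (a - single e 1) = vdeg ends (b - single e 1)"
    using assms(4) lookup_single_le[OF assms(5)] lookup_single_le[OF assms(6)] by (simp add: fun_eq_iff vdeg_diff)
  ultimately show "binom (a - single e 1) (b - single e 1) \<in> J"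
    using smaller assms(3) by simp
qed

lemma binom_in_ideal_if_primitive_below:
  fixes J :: "('e, 'k::field) mpoly set"
  assumes J: "ideal.subspace J"
    and smaller: "\<And>a' b'. total_deg a' < n \<Longrightarrow> vdeg ends a' = vdeg ends b' \<Longrightarrow> binom a' b' \<in> J"
    and "total_deg a \<le> n" "vdeg ends a = vdeg ends b"
    and pq: "lookup p \<le> lookup a" "lookup q \<le> lookup b" "primitive_binomial ends p q" "p \<noteq> a"
  shows "binom a b \<in> J"
proof -
  have vdeg_pq: "vdeg ends p = vdeg ends q" and "p \<noteq> 0"
    using pq(3) by (simp_all add: primitive_binomial_def)
  have "binom p q \<in> J"
    using smaller total_deg_less[OF pq(1,4)] vdeg_pq assms(3) by simp
  then have "binom a (a - p + q) \<in> J"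
    by (rule binom_in_ideal_replace[OF J pq(1)])
  moreover have "binom (a - p + q) b \<in> J"
  proof -
    obtain e where "e \<in> keys q"
      using \<open>p \<noteq> 0\<close> vdeg_eq_imp_zero_iff[OF vdeg_pq] by fastforce
    then have "e \<in> keys (a - p + q)" "e \<in> keys b"
      using keys_mono[OF pq(2)] by (simp add: in_keys_iff lookup_add, blast)
    moreover have "total_deg (a - p + q) \<le> n"
      using total_deg_eq_if_vdeg_eq[OF vdeg_pq] total_deg_diff[OF pq(1)] total_deg_less[OF pq(1,4)] assms(3)
      by (simp add: total_deg_add)
    moreover have "vdeg ends (a - p + q) = vdeg ends b"
      using vdeg_mono[OF pq(2), of ends] vdeg_pq assms(4)
      by (simp add: fun_eq_iff vdeg_add vdeg_diff[OF pq(1)])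
    ultimately show ?thesis
      using binom_in_ideal_if_common_edge[OF J smaller] by blast
  qed
  ultimately show ?thesis
    by (rule binom_in_ideal_trans[OF J])
qed

lemma binom_in_ideal_if_chord:
  fixes J :: "('e, 'k::field) mpoly set"
  assumes J: "ideal.subspace J"
    and smaller: "\<And>a' b'. total_deg a' < n \<Longrightarrow> vdeg ends a' = vdeg ends b' \<Longrightarrow> binom a' b' \<in> J"
    and "total_deg a \<le> n" and prim: "primitive_binomial ends a b"
    and chord: "\<forall>v\<in>ends e. vdeg ends a v \<noteq> 0" "e \<notin> keys a" "e \<notin> keys b"
  shows "binom a b \<in> J"
proof -
  have ab: "vdeg ends a = vdeg ends b"
    using prim by (simp add: primitive_binomial_def)
  obtain p q where pq: "lookup p \<le> lookup a" "lookup q \<le> lookup b" "p \<noteq> a"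
    "2 \<le> total_deg p" "vdeg ends p = vdeg ends (q + single e 1)"
    using primitive_chord_split[OF prim chord] by blast
  let ?s = "single e 1"
  have "binom p (q + ?s) \<in> J"
    using smaller total_deg_less[OF pq(1,3)] pq(5) assms(3) by simp
  then have "binom a (a - p + (q + ?s)) \<in> J"
    by (rule binom_in_ideal_replace[OF J pq(1)])
  moreover have "binom (a - p + ?s) (b - q) \<in> J"
  proof (rule smaller)
    show "total_deg (a - p + ?s) < n"
      using pq(4) total_deg_less[OF pq(1,3)] assms(3)
      by (simp add: total_deg_add total_deg_diff[OF pq(1)] total_deg_single)
    show "vdeg ends (a - p + ?s) = vdeg ends (b - q)"
    proof
      fix v
      have "vdeg ends p v = vdeg ends q v + vdeg ends ?s v" "vdeg ends p v \<le> vdeg ends b v"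
        using pq(5) vdeg_mono[OF pq(1), of ends v] ab by (simp_all add: vdeg_add)
      then show "vdeg ends (a - p + ?s) v = vdeg ends (b - q) v"
        using ab by (simp add: vdeg_add vdeg_diff[OF pq(1)] vdeg_diff[OF pq(2)])
    qed
  qed
  then have "binom (q + (a - p + ?s)) (q + (b - q)) \<in> J"
    by (rule binom_in_ideal_shift[OF J])
  then have "binom (a - p + (q + ?s)) b \<in> J"
    using pm_diff_add[OF pq(2)] by (simp add: ac_simps)
  ultimately show ?thesis
    by (rule binom_in_ideal_trans[OF J])
qed

lemma binom_in_ideal_if_chordless_cycles:
  fixes J :: "('e, 'k::field) mpoly set"
  assumes J: "ideal.subspace J"
    and cycles: "\<And>a b. primitive_binomial ends a b \<Longrightarrow> chordless ends a b \<Longrightarrow> binom a b \<in> J"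
    and "vdeg ends a = vdeg ends b"
  shows "binom a b \<in> J"
  using assms(3)
proof (induction "total_deg a" arbitrary: a b rule: less_induct)
  case less
  have smaller: "binom a' b' \<in> J" if "total_deg a' < total_deg a" "vdeg ends a' = vdeg ends b'" for a' b'
    using less.hyps that by simp
  show ?case
  proof (cases "keys a \<inter> keys b = {}")
    case False
    then show ?thesis
      using binom_in_ideal_if_common_edge[OF J smaller order.refl less.prems] by blast
  next
    case disjoint: True
    show ?thesis
    proof (cases "a = 0")
      case True
      then show ?thesis
        using vdeg_eq_imp_zero_iff[OF less.prems] J ideal.subspace_0 by simp
    next
      case False
      then obtain p q where pq: "lookup p \<le> lookup a" "lookup q \<le> lookup b" "primitive_binomial ends p q"
        using exists_primitive_below[OF less.prems _ disjoint] by blast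
      show ?thesis
      proof (cases "p = a")
        case False
        then show ?thesis
          using binom_in_ideal_if_primitive_below[OF J smaller order.refl less.prems pq] by blast
      next
        case True
        moreover have "q = b"
          using eq_if_le_vdeg_eq[OF pq(2)] pq(3) less.prems True by (simp add: primitive_binomial_def)
        ultimately have prim: "primitive_binomial ends a b"
          using pq(3) by simp
        show ?thesis
        proof (cases "chordless ends a b")
          case False
          then obtain e where "\<forall>v\<in>ends e. vdeg ends a v \<noteq> 0" "e \<notin> keys a" "e \<notin> keys b"
            by (auto simp: chordless_def)
          then show ?thesis
            using binom_in_ideal_if_chord[OF J smaller order.refl prim] by blast
        qed (rule cycles[OF prim])
      qed
    qed
  qed
qed

lemma primitive_below_support:
  assumes prim: "primitive_binomial ends a b"
    and "keys t \<subseteq> keys a" "keys t' \<subseteq> keys b" "vdeg ends t = vdeg ends t'" "t \<noteq> 0"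
  shows "lookup a \<le> lookup t" "lookup b \<le> lookup t'"
proof -
  have ab: "vdeg ends a = vdeg ends b"
    and minimal: "\<And>p q. lookup p \<le> lookup a \<Longrightarrow> lookup q \<le> lookup b \<Longrightarrow> vdeg ends p = vdeg ends q \<Longrightarrow> p \<noteq> 0 \<Longrightarrow> p = a"
    using prim by (auto simp: primitive_binomial_def)
  have a1: "\<forall>v. vdeg ends a v \<le> 1" and b1: "\<forall>v. vdeg ends b v \<le> 1"
    using primitive_vdeg_le_1[OF prim] ab by metis+
  have vdeg_keys: "vdeg ends (edge_monom (keys t)) = vdeg ends (edge_monom (keys t'))"
    using assms(2-4) by (simp add: fun_eq_iff vdeg_edge_monom_keys[OF a1] vdeg_edge_monom_keys[OF b1])
  moreover have "edge_monom (keys t) \<noteq> 0"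
    using assms(5) keys_edge_monom[of "keys t"] by (metis finite keys_eq_empty)
  ultimately have ta: "edge_monom (keys t) = a"
    by (rule minimal[OF edge_monom_le[OF assms(2)] edge_monom_le[OF assms(3)]])
  have "vdeg ends (edge_monom (keys t')) = vdeg ends b"
    using vdeg_keys ta ab by (simp only:)
  then have tb: "edge_monom (keys t') = b"
    by (rule eq_if_le_vdeg_eq[OF edge_monom_le[OF assms(3)]])
  show "lookup a \<le> lookup t"
    unfolding ta[symmetric] by (auto simp: le_fun_def lookup_edge_monom in_keys_iff)
  show "lookup b \<le> lookup t'"
    unfolding tb[symmetric] by (auto simp: le_fun_def lookup_edge_monom in_keys_iff)
qed

lemma primitive_support_multiple:
  assumes prim: "primitive_binomial ends a b"
    and "keys t \<subseteq> keys a" "keys t' \<subseteq> keys b" "vdeg ends t = vdeg ends t'"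
  shows "\<exists>k. \<forall>e. lookup t e = k * lookup a e \<and> lookup t' e = k * lookup b e"
  using assms(2-4)
proof (induction "total_deg t" arbitrary: t t' rule: less_induct)
  case less
  show ?case
  proof (cases "t = 0")
    case True
    then have "t' = 0"
      using vdeg_eq_imp_zero_iff[OF less.prems(3)] by simp
    with True show ?thesis
      by (intro exI[of _ 0]) simp
  next
    case False
    have at: "lookup a \<le> lookup t" and bt: "lookup b \<le> lookup t'"
      using primitive_below_support[OF prim less.prems False] by simp_all
    have "total_deg (t - a) < total_deg t"
    proof (rule total_deg_less)
      obtain e where "e \<in> keys a"
        using prim by (fastforce simp: primitive_binomial_def)
      then have "lookup (t - a) e \<noteq> lookup t e"
        using at by (auto simp: lookup_minus in_keys_iff le_fun_def dest: spec[of _ e])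
      then show "t - a \<noteq> t"
        by auto
    qed (simp add: le_fun_def lookup_minus)
    moreover have "keys (t - a) \<subseteq> keys a" "keys (t' - b) \<subseteq> keys b"
      using less.prems(1,2) by (auto simp: in_keys_iff lookup_minus)
    moreover have "vdeg ends (t - a) = vdeg ends (t' - b)"
      using less.prems(3) prim by (simp add: fun_eq_iff vdeg_diff[OF at] vdeg_diff[OF bt] primitive_binomial_def)
    ultimately obtain k where k: "\<forall>e. lookup (t - a) e = k * lookup a e \<and> lookup (t' - b) e = k * lookup b e"
      using less.hyps by blast
    have "lookup t e = lookup (t - a) e + lookup a e" "lookup t' e = lookup (t' - b) e + lookup b e" for e
      using pm_diff_add[OF at] pm_diff_add[OF bt] by (metis lookup_add)+
    then show ?thesis
      using k by (intro exI[of _ "Suc k"]) simp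
  qed
qed

lemma chordless_keys_subset:
  assumes prim: "primitive_binomial ends a b" and chordless: "chordless ends a b"
    and t: "keys t \<subseteq> keys a" "keys t \<inter> keys t' = {}" "vdeg ends t = vdeg ends t'"
  shows "keys t' \<subseteq> keys b"
proof
  fix e assume e: "e \<in> keys t'"
  have t_at: "\<exists>e'\<in>keys t. v \<in> ends e'" if "v \<in> ends e" for v
  proof -
    have "vdeg ends t v \<noteq> 0"
      using vdeg_ne_0_if_in_keys[of e t' v ends] e that t(3) by simp
    then show ?thesis
      by (auto simp: vdeg_eq_0_iff)
  qed
  have "vdeg ends a v \<noteq> 0" if v: "v \<in> ends e" for v
    using t_at[OF v] t(1) vdeg_ne_0_if_in_keys[where ends = ends] by blast
  then have "e \<in> keys a \<or> e \<in> keys b"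
    using chordless by (simp add: chordless_def)
  moreover have "e \<notin> keys a"
  proof
    assume "e \<in> keys a"
    obtain v where v: "v \<in> ends e"
      using ends_nonempty by blast
    then obtain e' where "e' \<in> keys t" "v \<in> ends e'"
      using t_at by blast
    moreover have "e' \<noteq> e"
      using \<open>e' \<in> keys t\<close> e t(2) by blast
    ultimately have "lookup a e + lookup a e' \<le> vdeg ends a v"
      using lookup_add_le_vdeg[of e e' v a] v by simp
    moreover have "e' \<in> keys a"
      using \<open>e' \<in> keys t\<close> t(1) by blast
    ultimately show False
      using \<open>e \<in> keys a\<close> primitive_vdeg_le_1[OF prim, of v] by (simp add: in_keys_iff)
  qed
  ultimately show "e \<in> keys b"
    by blast
qed

lemma chordless_primitive_rigid:
  assumes prim: "primitive_binomial ends a b" and chordless: "chordless ends a b"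
    and t: "keys t \<subseteq> keys a" "keys t \<inter> keys t' = {}" "t \<noteq> t'"
    and tt': "vdeg ends t = vdeg ends t'" "A_deg A t = A_deg A t'"
  shows "A_deg A a = A_deg A b"
proof -
  obtain k where k: "\<And>e. lookup t e = k * lookup a e" "\<And>e. lookup t' e = k * lookup b e"
    using primitive_support_multiple[OF prim t(1) chordless_keys_subset[OF prim chordless t(1,2) tt'(1)] tt'(1)]
    by blast
  have "k \<noteq> 0"
  proof
    assume "k = 0"
    then have "t = 0" "t' = 0"
      using k by (simp_all add: poly_mapping_eqI)
    with t(3) show False
      by simp
  qed
  moreover have "int k * A_deg A a i = int k * A_deg A b i" for i
  proof -
    have "int k * A_deg A a i = A_deg A t i"
      by (simp add: A_deg_scale[OF k(1)])
    also have "\<dots> = int k * A_deg A b i"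
      by (simp add: tt'(2) A_deg_scale[OF k(2)])
    finally show ?thesis .
  qed
  ultimately show ?thesis
    by (simp add: fun_eq_iff)
qed

lemma chordless_binom_in_toric_sum:
  fixes As :: "nat \<Rightarrow> 'e \<Rightarrow> nat \<Rightarrow> int"
  assumes rad: "toric_ideal (graph_config ends) = rad (toric_sum s As :: ('e, 'k::field) mpoly set)"
    and prim: "primitive_binomial ends a b" and chordless: "chordless ends a b"
  shows "(binom a b :: ('e, 'k) mpoly) \<in> toric_sum s As"
proof -
  let ?I = "toric_ideal (graph_config ends) :: ('e, 'k) mpoly set"
  let ?J = "toric_sum s As :: ('e, 'k) mpoly set"
  have ab: "vdeg ends a = vdeg ends b" and "a \<noteq> 0" "keys a \<inter> keys b = {}"
    using prim by (auto simp: primitive_binomial_def)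
  then have "binom a b \<in> ?I"
    by (simp add: binom_in_toric_ideal_iff A_deg_graph_config_eq_iff)
  then have "binom a b \<in> rad ?J"
    using rad by simp
  have "b \<noteq> 0"
    using vdeg_eq_imp_zero_iff[OF ab] \<open>a \<noteq> 0\<close> by simp
  then have "\<not> keys b \<subseteq> keys a"
    using \<open>keys a \<inter> keys b = {}\<close> by (metis inf.absorb_iff2 keys_eq_empty)
  have J_I: "?J \<subseteq> ?I"
    using rad subset_rad by blast
  have summands: "toric_ideal (As i) \<subseteq> ?I" if "i < s" for i
    using toric_ideal_subset_toric_sum[OF that] J_I by (rule subset_trans)
  have rigid: "A_deg (As i) a = A_deg (As i) b"
    if "i < s" "keys t \<subseteq> keys a" "keys t \<inter> keys t' = {}" "t \<noteq> t'"
      "A_deg (graph_config ends) t = A_deg (graph_config ends) t'" "A_deg (As i) t = A_deg (As i) t'"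
    for i t t'
    using chordless_primitive_rigid[OF prim chordless that(2-4)] that(5,6)
    by (simp add: A_deg_graph_config_eq_iff)
  have "\<exists>i<s. (binom a b :: ('e, 'k) mpoly) \<in> toric_ideal (As i)"
    by (rule binom_in_toric_summand_if_rigid) (fact summands \<open>binom a b \<in> rad ?J\<close> \<open>\<not> keys b \<subseteq> keys a\<close> rigid)+
  then show ?thesis
    using toric_ideal_subset_toric_sum by blast
qed

lemma toric_sum_eq_if_rad_eq:
  fixes As :: "nat \<Rightarrow> 'e \<Rightarrow> nat \<Rightarrow> int"
  assumes rad: "toric_ideal (graph_config ends) = rad (toric_sum s As :: ('e, 'k::field) mpoly set)"
  shows "toric_ideal (graph_config ends) = (toric_sum s As :: ('e, 'k) mpoly set)"
proof
  show "toric_sum s As \<subseteq> (toric_ideal (graph_config ends) :: ('e, 'k) mpoly set)"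
    using rad subset_rad by blast
  have "binom a b \<in> (toric_sum s As :: ('e, 'k) mpoly set)"
    if "A_deg (graph_config ends) a = A_deg (graph_config ends) b" for a b
    using binom_in_ideal_if_chordless_cycles[OF ideal_toric_sum chordless_binom_in_toric_sum[OF rad]] that
    by (simp add: A_deg_graph_config_eq_iff)
  then show "toric_ideal (graph_config ends) \<subseteq> (toric_sum s As :: ('e, 'k) mpoly set)"
    by (rule toric_ideal_subset_if_binoms[OF ideal_toric_sum])
qed

end

theorem theorem3p1:
  fixes ends :: "'e::finite \<Rightarrow> 'v::finite set"
  assumes "simple_graph ends" and "graph_connected ends" and "graph_bipartite ends"
  defines "I \<equiv> (toric_ideal (graph_config ends) :: ('e, 'k::field) mpoly set)"
  shows "(\<exists>s. is_splitting I s) = (\<exists>s. is_rad_splitting I s)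
         \<and> ((\<exists>s. is_splitting I s) \<longrightarrow> Split I = Split_rad I)"
proof -
  obtain X where "\<forall>e. \<exists>x y. ends e = {x, y} \<and> x \<in> X \<and> y \<notin> X"
    using assms(3) unfolding graph_bipartite_def by blast
  then have "bipartite_graph ends X"
    using assms(1) by (simp add: bipartite_graph_def)
  moreover have "rad I = I"
    unfolding I_def by (rule rad_toric_ideal)
  ultimately have "I = toric_sum s As \<longleftrightarrow> I = rad (toric_sum s As)" for s As
    unfolding I_def by (metis bipartite_graph.toric_sum_eq_if_rad_eq)
  then have "is_splitting I = is_rad_splitting I"
    by (simp add: fun_eq_iff is_splitting_def is_rad_splitting_def)
  then show ?thesis
    by (simp add: Defs.Split_def Split_rad_def)
qed

end
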